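(* Let $G$ be a finite simple graph without isolated vertices, and consider any position of the Disjoint Domination Game on $G$ in which neither (s* ) nor (d* ) holds. Then the player to move has at least one legal move.
   Context: For a vertex $v$, $N[v]$ denotes its closed neighborhood. In the Disjoint Domination Game on $G$, two players (Dom and Sepy) alternately color vertices with colors from $\{p,b\}$ (either player may use either color); $V_p,V_b$ denote the current sets of vertices of each color. A legal move is a choice of a vertex $v$ and a color $c$ such that (i) $v$ is uncolored and (ii) some $u\in N[v]$ satisfies $N[u]\cap V_c=\emptyset$; then $v$ gets color $c$. Condition (s* ): some vertex $v$ has $N[v]\subseteq V_p$ or $N[v]\subseteq V_b$. Condition (d* ): both $V_p$ and $V_b$ are dominating sets of $G$. *)

theory Defs
  imports Main
begin

definition simple_graph :: "'a set \<Rightarrow> ('a \<Rightarrow> 'a \<Rightarrow> bool) \<Rightarrow> bool" where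
  "simple_graph V E \<longleftrightarrow> finite V \<and> (\<forall>u v. E u v \<longrightarrow> u \<in> V \<and> v \<in> V)
     \<and> (\<forall>u v. E u v \<longrightarrow> E v u) \<and> (\<forall>v. \<not> E v v)"

definition no_isolated :: "'a set \<Rightarrow> ('a \<Rightarrow> 'a \<Rightarrow> bool) \<Rightarrow> bool" where
  "no_isolated V E \<longleftrightarrow> (\<forall>v\<in>V. \<exists>u. E v u)"

definition cnbhd :: "'a set \<Rightarrow> ('a \<Rightarrow> 'a \<Rightarrow> bool) \<Rightarrow> 'a \<Rightarrow> 'a set" where
  "cnbhd V E v = insert v {u \<in> V. E v u}"

datatype color = P | B

type_synonym 'a position = "color \<Rightarrow> 'a set"

definition legal_move :: "'a set \<Rightarrow> ('a \<Rightarrow> 'a \<Rightarrow> bool) \<Rightarrow> 'a position \<Rightarrow> 'a \<Rightarrow> color \<Rightarrow> bool" where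
  "legal_move V E S v c \<longleftrightarrow> v \<in> V \<and> v \<notin> S P \<and> v \<notin> S B
     \<and> (\<exists>u \<in> cnbhd V E v. cnbhd V E u \<inter> S c = {})"

definition play_move :: "'a position \<Rightarrow> 'a \<Rightarrow> color \<Rightarrow> 'a position" where
  "play_move S v c = S(c := insert v (S c))"

inductive reachable :: "'a set \<Rightarrow> ('a \<Rightarrow> 'a \<Rightarrow> bool) \<Rightarrow> 'a position \<Rightarrow> bool"
  for V E where
  start: "reachable V E (\<lambda>_. {})"
| step: "reachable V E S \<Longrightarrow> legal_move V E S v c \<Longrightarrow> reachable V E (play_move S v c)"

definition cond_s :: "'a set \<Rightarrow> ('a \<Rightarrow> 'a \<Rightarrow> bool) \<Rightarrow> 'a position \<Rightarrow> bool" where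
  "cond_s V E S \<longleftrightarrow> (\<exists>v\<in>V. cnbhd V E v \<subseteq> S P \<or> cnbhd V E v \<subseteq> S B)"

definition dominating :: "'a set \<Rightarrow> ('a \<Rightarrow> 'a \<Rightarrow> bool) \<Rightarrow> 'a set \<Rightarrow> bool" where
  "dominating V E D \<longleftrightarrow> D \<subseteq> V \<and> (\<forall>v\<in>V. cnbhd V E v \<inter> D \<noteq> {})"

definition cond_d :: "'a set \<Rightarrow> ('a \<Rightarrow> 'a \<Rightarrow> bool) \<Rightarrow> 'a position \<Rightarrow> bool" where
  "cond_d V E S \<longleftrightarrow> dominating V E (S P) \<and> dominating V E (S B)"

end

theory Submission
  imports Defs
begin

text \<open>If (d*) fails, some vertex w has a closed neighbourhood free of some colour c.
  If (s*) fails too, that neighbourhood is not monochromatic, so it contains an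
  uncoloured vertex v; by symmetry of the closed neighbourhood w witnesses that
  colouring v with c is legal.\<close>

lemma reachable_color_subset: "reachable V E S \<Longrightarrow> S c \<subseteq> V"
  by (induction rule: reachable.induct) (auto simp: play_move_def legal_move_def)

lemma cnbhd_subset: "v \<in> V \<Longrightarrow> cnbhd V E v \<subseteq> V"
  by (auto simp: cnbhd_def)

lemma cnbhd_sym: "simple_graph V E \<Longrightarrow> v \<in> V \<Longrightarrow> u \<in> cnbhd V E v \<Longrightarrow> v \<in> cnbhd V E u"
  by (auto simp: cnbhd_def simple_graph_def)

lemma uncolored_in_cnbhd_if_not_cond_s:
  assumes "\<not> cond_s V E S" and "w \<in> V" and "cnbhd V E w \<inter> S c = {}"
  obtains v where "v \<in> cnbhd V E w" "v \<notin> S P" "v \<notin> S B"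
proof -
  have "\<not> cnbhd V E w \<subseteq> S P" "\<not> cnbhd V E w \<subseteq> S B"
    using assms(1,2) by (auto simp: cond_s_def)
  then show thesis
    using assms(3) that by (cases c) auto
qed

lemma legal_move_if_undominated:
  assumes "simple_graph V E" and "\<not> cond_s V E S"
    and "w \<in> V" and "cnbhd V E w \<inter> S c = {}"
  shows "\<exists>v. legal_move V E S v c"
proof -
  obtain v where v: "v \<in> cnbhd V E w" "v \<notin> S P" "v \<notin> S B"
    using uncolored_in_cnbhd_if_not_cond_s[OF assms(2-4)] .
  have "v \<in> V" using cnbhd_subset[OF assms(3)] v(1) by blast
  moreover have "w \<in> cnbhd V E v" using cnbhd_sym[OF assms(1,3) v(1)] .
  ultimately have "legal_move V E S v c"
    using v(2,3) assms(4) by (auto simp: legal_move_def)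
  then show ?thesis ..
qed

theorem lemma1:
  fixes V :: "'a set" and E :: "'a \<Rightarrow> 'a \<Rightarrow> bool" and S :: "'a position"
  assumes "simple_graph V E" and "no_isolated V E"
    and "reachable V E S"
    and "\<not> cond_s V E S" and "\<not> cond_d V E S"
  shows "\<exists>v c. legal_move V E S v c"
proof -
  have "S c \<subseteq> V" for c using reachable_color_subset[OF assms(3)] .
  then obtain c w where "w \<in> V" "cnbhd V E w \<inter> S c = {}"
    using assms(5) unfolding cond_d_def dominating_def by blast
  then show ?thesis using legal_move_if_undominated[OF assms(1,4)] by blast
qed

end
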